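(* Let $X$ be a real Hilbert space, let $\alpha_1,\alpha_2\in\left]-\infty,1\right[$, let $\beta_1,\beta_2\ge0$, and suppose $\alpha_2(\alpha_2-1)\le\beta_2^2$. Set $$\delta_1=\tfrac{\alpha_1}{1-\alpha_1}\Big(1-\tfrac{(1-\alpha_2)^2-\beta_2^2}{1-\alpha_2}\Big),\quad \delta_2=\tfrac{\alpha_2}{1-\alpha_2},$$ $$\delta_3=1-\Big(\tfrac{(1-\alpha_1)^2-\beta_1^2}{1-\alpha_1}\Big(1-\tfrac{(1-\alpha_2)^2-\beta_2^2}{1-\alpha_2}\Big)+\tfrac{(1-\alpha_2)^2-\beta_2^2}{1-\alpha_2}\Big).$$ Suppose $R_1\colon X\to X$ admits an $(\alpha_1,\beta_1)$-I-N decomposition and $R_2\colon X\to X$ admits an $(\alpha_2,\beta_2)$-I-N decomposition. Then for all $x,y\in X$, $$\|R_2R_1x-R_2R_1y\|^2+\delta_1\|(\mathrm{Id}-R_1)x-(\mathrm{Id}-R_1)y\|^2+\delta_2\|(\mathrm{Id}-R_2)R_1x-(\mathrm{Id}-R_2)R_1y\|^2\le\delta_3\|x-y\|^2.$$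
   Context: For $(\alpha,\beta)\in\mathbb{R}\times[0,\infty[$, an operator $R\colon X\to X$ admits an $(\alpha,\beta)$-I-N (Identity-Nonexpansive) decomposition if there exists a nonexpansive ($1$-Lipschitz) $N\colon X\to X$ with $R=\alpha\mathrm{Id}+\beta N$. *)

theory Defs
  imports "HOL-Analysis.Analysis"
begin

definition nonexpansive :: "('a::real_normed_vector \<Rightarrow> 'a) \<Rightarrow> bool" where
  "nonexpansive N \<longleftrightarrow> (\<forall>x y. norm (N x - N y) \<le> norm (x - y))"

definition IN_decomposition :: "real \<Rightarrow> real \<Rightarrow> ('a::real_normed_vector \<Rightarrow> 'a) \<Rightarrow> bool" where
  "IN_decomposition \<alpha> \<beta> R \<longleftrightarrow> (\<exists>N. nonexpansive N \<and> (\<forall>x. R x = \<alpha> *\<^sub>R x + \<beta> *\<^sub>R N x))"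

end

theory Submission
  imports Defs
begin

text \<open>Squaring \<open>\<parallel>(R x - R y) - \<alpha>(x - y)\<parallel> \<le> \<beta>\<parallel>x - y\<parallel>\<close> and eliminating the inner product
  \<open>\<langle>R x - R y, x - y\<rangle>\<close> against \<open>\<parallel>(Id - R)x - (Id - R)y\<parallel>\<^sup>2\<close> shows that a single
  \<open>(\<alpha>,\<beta>)\<close>-I-N operator satisfies
  \<open>\<parallel>R x - R y\<parallel>\<^sup>2 + \<alpha>/(1-\<alpha>) \<parallel>(Id - R)x - (Id - R)y\<parallel>\<^sup>2 \<le> c \<parallel>x - y\<parallel>\<^sup>2\<close> with
  \<open>c = (\<alpha> - \<alpha>\<^sup>2 + \<beta>\<^sup>2)/(1-\<alpha>)\<close>. Apply this to \<open>R\<^sub>1\<close> at \<open>x, y\<close> and to \<open>R\<^sub>2\<close> at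
  \<open>R\<^sub>1x, R\<^sub>1y\<close>, multiply the first inequality by \<open>c\<^sub>2\<close> (nonnegative exactly when
  \<open>\<alpha>\<^sub>2(\<alpha>\<^sub>2-1) \<le> \<beta>\<^sub>2\<^sup>2\<close>) and add: the term \<open>\<parallel>R\<^sub>1x - R\<^sub>1y\<parallel>\<^sup>2\<close> cancels, and
  \<open>\<delta>\<^sub>1 = \<alpha>\<^sub>1/(1-\<alpha>\<^sub>1) c\<^sub>2\<close>, \<open>\<delta>\<^sub>3 = c\<^sub>1c\<^sub>2\<close>.\<close>

lemma IN_decomposition_diff_le:
  assumes "IN_decomposition \<alpha> \<beta> R" and "\<beta> \<ge> 0"
  shows "norm ((R x - R y) - \<alpha> *\<^sub>R (x - y)) \<le> \<beta> * norm (x - y)"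
proof -
  obtain N where N: "nonexpansive N" "\<And>x. R x = \<alpha> *\<^sub>R x + \<beta> *\<^sub>R N x"
    using assms(1) unfolding IN_decomposition_def by blast
  have "(R x - R y) - \<alpha> *\<^sub>R (x - y) = \<beta> *\<^sub>R (N x - N y)"
    using N(2) by (simp add: algebra_simps)
  then have "norm ((R x - R y) - \<alpha> *\<^sub>R (x - y)) = \<beta> * norm (N x - N y)"
    using assms(2) by simp
  also have "\<dots> \<le> \<beta> * norm (x - y)"
    using N(1) assms(2) unfolding nonexpansive_def by (simp add: mult_left_mono)
  finally show ?thesis .
qed

lemma norm_perturbation_inequality:
  fixes u r :: "'a::real_inner"
  assumes "\<alpha> < 1" and "norm (r - \<alpha> *\<^sub>R u) \<le> \<beta> * norm u"
  shows "norm r ^ 2 + \<alpha> / (1 - \<alpha>) * norm (u - r) ^ 2 \<le> (\<alpha> - \<alpha>^2 + \<beta>^2) / (1 - \<alpha>) * norm u ^ 2"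
proof -
  have pos: "1 - \<alpha> > 0" using assms(1) by simp
  have norm_r_shift: "norm (r - \<alpha> *\<^sub>R u) ^ 2 = norm r ^ 2 - 2 * \<alpha> * inner r u + \<alpha>^2 * norm u ^ 2"
    unfolding power2_norm_eq_inner
    by (simp add: inner_diff_left inner_diff_right inner_commute power2_eq_square algebra_simps)
  have norm_u_r: "norm (u - r) ^ 2 = norm u ^ 2 - 2 * inner r u + norm r ^ 2"
    unfolding power2_norm_eq_inner
    by (simp add: inner_diff_left inner_diff_right inner_commute algebra_simps)
  have "(1 - \<alpha>) * (norm r ^ 2 + \<alpha> / (1 - \<alpha>) * norm (u - r) ^ 2)
      = norm (r - \<alpha> *\<^sub>R u) ^ 2 + (\<alpha> - \<alpha>^2) * norm u ^ 2"
    using pos unfolding norm_r_shift norm_u_r by (simp add: field_simps power2_eq_square)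
  also have "\<dots> \<le> \<beta>^2 * norm u ^ 2 + (\<alpha> - \<alpha>^2) * norm u ^ 2"
    using power_mono[OF assms(2), of 2] by (simp add: power_mult_distrib)
  also have "\<dots> = (1 - \<alpha>) * ((\<alpha> - \<alpha>^2 + \<beta>^2) / (1 - \<alpha>) * norm u ^ 2)"
    using pos by (simp add: field_simps)
  finally show ?thesis
    using pos by (simp add: mult_le_cancel_left_pos del: times_divide_eq_right)
qed

lemma IN_decomposition_inequality:
  fixes R :: "'a::real_inner \<Rightarrow> 'a"
  assumes "IN_decomposition \<alpha> \<beta> R" and "\<alpha> < 1" and "\<beta> \<ge> 0"
  shows "norm (R x - R y) ^ 2 + \<alpha> / (1 - \<alpha>) * norm ((x - R x) - (y - R y)) ^ 2
         \<le> (\<alpha> - \<alpha>^2 + \<beta>^2) / (1 - \<alpha>) * norm (x - y) ^ 2"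
proof -
  have "(x - R x) - (y - R y) = (x - y) - (R x - R y)" by (simp add: algebra_simps)
  then show ?thesis
    using norm_perturbation_inequality[OF assms(2) IN_decomposition_diff_le[OF assms(1,3)]]
    by (simp only:)
qed

theorem mainTheorem5:
  fixes R1 R2 :: "'a::{real_inner, complete_space} \<Rightarrow> 'a"
    and \<alpha>1 \<alpha>2 \<beta>1 \<beta>2 \<delta>1 \<delta>2 \<delta>3 :: real
  assumes "\<alpha>1 < 1" and "\<alpha>2 < 1" and "\<beta>1 \<ge> 0" and "\<beta>2 \<ge> 0"
    and "\<alpha>2 * (\<alpha>2 - 1) \<le> \<beta>2 ^ 2"
    and "\<delta>1 = \<alpha>1 / (1 - \<alpha>1) * (1 - ((1 - \<alpha>2)^2 - \<beta>2^2) / (1 - \<alpha>2))"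
    and "\<delta>2 = \<alpha>2 / (1 - \<alpha>2)"
    and "\<delta>3 = 1 - (((1 - \<alpha>1)^2 - \<beta>1^2) / (1 - \<alpha>1) * (1 - ((1 - \<alpha>2)^2 - \<beta>2^2) / (1 - \<alpha>2))
                    + ((1 - \<alpha>2)^2 - \<beta>2^2) / (1 - \<alpha>2))"
    and "IN_decomposition \<alpha>1 \<beta>1 R1"
    and "IN_decomposition \<alpha>2 \<beta>2 R2"
  shows "norm (R2 (R1 x) - R2 (R1 y))^2
         + \<delta>1 * norm ((x - R1 x) - (y - R1 y))^2
         + \<delta>2 * norm ((R1 x - R2 (R1 x)) - (R1 y - R2 (R1 y)))^2
         \<le> \<delta>3 * norm (x - y)^2"
proof -
  define c1 where "c1 = (\<alpha>1 - \<alpha>1^2 + \<beta>1^2) / (1 - \<alpha>1)"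
  define c2 where "c2 = (\<alpha>2 - \<alpha>2^2 + \<beta>2^2) / (1 - \<alpha>2)"
  have c1_eq: "((1 - \<alpha>1)^2 - \<beta>1^2) / (1 - \<alpha>1) = 1 - c1"
    using assms(1) unfolding c1_def by (simp add: field_simps power2_eq_square)
  have c2_eq: "((1 - \<alpha>2)^2 - \<beta>2^2) / (1 - \<alpha>2) = 1 - c2"
    using assms(2) unfolding c2_def by (simp add: field_simps power2_eq_square)
  have "c2 \<ge> 0"
    unfolding c2_def using assms(2,5) by (simp add: power2_eq_square algebra_simps)
  moreover have "norm (R1 x - R1 y) ^ 2 + \<alpha>1 / (1 - \<alpha>1) * norm ((x - R1 x) - (y - R1 y)) ^ 2
      \<le> c1 * norm (x - y) ^ 2"
    unfolding c1_def by (rule IN_decomposition_inequality[OF assms(9,1,3)])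
  ultimately have "c2 * norm (R1 x - R1 y) ^ 2 + c2 * \<alpha>1 / (1 - \<alpha>1) * norm ((x - R1 x) - (y - R1 y)) ^ 2
      \<le> c2 * c1 * norm (x - y) ^ 2"
    by (metis (no_types, lifting) distrib_left mult.assoc mult_left_mono times_divide_eq_right)
  moreover have "norm (R2 (R1 x) - R2 (R1 y)) ^ 2
      + \<alpha>2 / (1 - \<alpha>2) * norm ((R1 x - R2 (R1 x)) - (R1 y - R2 (R1 y))) ^ 2
      \<le> c2 * norm (R1 x - R1 y) ^ 2"
    unfolding c2_def by (rule IN_decomposition_inequality[OF assms(10,2,4)])
  ultimately show ?thesis
    unfolding assms(6-8) c1_eq c2_eq by (simp add: algebra_simps)
qed

end
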